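(* Let $A$ be a finite alphabet and $Y\subseteq A^+$ a set of nonempty words. Let $\mathcal{S}=(A,Y,R')$ be the flat splicing system with $R'=\{\langle a\mid1-1\mid b\rangle : a,b\in A\}$. Then $Y^{\leftarrow_*}\setminus\{1\}=L(\mathcal{S})$.
   Context: $1$ denotes the empty word, $A^+=A^*\setminus\{1\}$. Flat splicing system $\mathcal{S}=(A,Y,R')$: rules $\langle\alpha\mid\beta-\gamma\mid\delta\rangle$ with $\alpha,\beta,\gamma,\delta\in A^*$; applying it to $u=x\alpha\beta y$ and $v=\gamma z\delta$ yields $x\alpha\gamma z\delta\beta y$. In particular $\langle a\mid1-1\mid b\rangle$ applied to $u=xay$ and $v=zb$ yields $xazby$. $L(\mathcal{S})$ is the smallest language containing $Y$ and closed under applying rules of $R'$. Iterated insertion: for $Z,Y\subseteq A^*$, $Z\leftarrow Y=\{z_1yz_2: z_1z_2\in Z, y\in Y\}$; $Y^{\leftarrow_0}=\{1\}$, $Y^{\leftarrow_{i+1}}=Y^{\leftarrow_i}\leftarrow Y$, $Y^{\leftarrow_*}=\bigcup_{i\ge0}Y^{\leftarrow_i}$. *)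

theory Defs
  imports Main
begin

(* Words over an alphabet are lists; the empty word 1 is []. *)

type_synonym 'a flat_rule = "'a list \<times> 'a list \<times> 'a list \<times> 'a list"

definition flat_apply :: "'a flat_rule \<Rightarrow> 'a list \<Rightarrow> 'a list \<Rightarrow> 'a list \<Rightarrow> bool" where
  "flat_apply r u v w \<longleftrightarrow> (case r of (\<alpha>, \<beta>, \<gamma>, \<delta>) \<Rightarrow>
     (\<exists>x y z. u = x @ \<alpha> @ \<beta> @ y \<and> v = \<gamma> @ z @ \<delta> \<and>
               w = x @ \<alpha> @ \<gamma> @ z @ \<delta> @ \<beta> @ y))"

inductive_set flat_lang :: "'a list set \<Rightarrow> 'a flat_rule set \<Rightarrow> 'a list set"
  for Y :: "'a list set" and R :: "'a flat_rule set" where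
  base: "u \<in> Y \<Longrightarrow> u \<in> flat_lang Y R"
| step: "\<lbrakk>r \<in> R; u \<in> flat_lang Y R; v \<in> flat_lang Y R; flat_apply r u v w\<rbrakk>
          \<Longrightarrow> w \<in> flat_lang Y R"

definition insertion :: "'a list set \<Rightarrow> 'a list set \<Rightarrow> 'a list set" where
  "insertion Z Y = {z1 @ y @ z2 | z1 y z2. z1 @ z2 \<in> Z \<and> y \<in> Y}"

fun iter_insertion :: "'a list set \<Rightarrow> nat \<Rightarrow> 'a list set" where
  "iter_insertion Y 0 = {[]}"
| "iter_insertion Y (Suc i) = insertion (iter_insertion Y i) Y"

definition iter_insertion_star :: "'a list set \<Rightarrow> 'a list set" where
  "iter_insertion_star Y = (\<Union>i. iter_insertion Y i)"

definition R_ab :: "'a set \<Rightarrow> 'a flat_rule set" where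
  "R_ab A = {([a], [], [], [b]) | a b. a \<in> A \<and> b \<in> A}"

end

theory Submission
  imports Defs
begin

text \<open>A rule \<open>\<langle>a | 1 - 1 | b\<rangle>\<close> inserts a word ending in \<open>b\<close> right after an occurrence of \<open>a\<close>;
  since every nonempty word over \<open>A\<close> ends in a letter of \<open>A\<close>, this is exactly insertion of a
  nonempty word after a nonempty prefix. Insertion at the front, \<open>v u\<close>, is recovered by induction
  on the derivation of \<open>u\<close>: prepending \<open>v\<close> commutes with every splicing step, and for \<open>u \<in> Y\<close>
  the word \<open>v u\<close> is obtained by inserting \<open>u\<close> after the last letter of \<open>v\<close>. Conversely, nested
  insertions add their degrees, so the iterated insertion closure is closed under the rules.\<close>

lemma insertionI: "z1 @ z2 \<in> Z \<Longrightarrow> y \<in> Y \<Longrightarrow> z1 @ y @ z2 \<in> insertion Z Y"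
  unfolding insertion_def by blast

lemma insertionE:
  assumes "w \<in> insertion Z Y"
  obtains z1 y z2 where "w = z1 @ y @ z2" "z1 @ z2 \<in> Z" "y \<in> Y"
  using assms unfolding insertion_def by blast

lemma iter_insertion_add:
  assumes "v \<in> iter_insertion Y j" and "x @ y \<in> iter_insertion Y i"
  shows "x @ v @ y \<in> iter_insertion Y (i + j)"
  using assms(1)
proof (induction j arbitrary: v)
  case 0
  then show ?case using assms(2) by simp
next
  case (Suc j)
  from Suc.prems obtain v1 u v2
    where v: "v = v1 @ u @ v2" "v1 @ v2 \<in> iter_insertion Y j" "u \<in> Y"
    by (auto elim: insertionE)
  have "(x @ v1) @ (v2 @ y) \<in> iter_insertion Y (i + j)"
    using Suc.IH[OF v(2)] by simp
  from insertionI[OF this v(3)] show ?case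
    using v(1) by simp
qed

lemma Y_subset_iter_insertion_star: "Y \<subseteq> iter_insertion_star Y"
proof
  fix u assume "u \<in> Y"
  then have "[] @ u @ [] \<in> insertion (iter_insertion Y 0) Y"
    by (intro insertionI) simp_all
  then have "u \<in> iter_insertion Y (Suc 0)"
    by simp
  then show "u \<in> iter_insertion_star Y"
    unfolding iter_insertion_star_def by blast
qed

lemma iter_insertion_star_insert:
  "x @ y \<in> iter_insertion_star Y \<Longrightarrow> v \<in> iter_insertion_star Y
    \<Longrightarrow> x @ v @ y \<in> iter_insertion_star Y"
  unfolding iter_insertion_star_def by (blast intro: iter_insertion_add)

lemma flat_apply_R_abE:
  assumes "r \<in> R_ab A" and "flat_apply r u v w"
  obtains x a y z b where "u = x @ [a] @ y" "v = z @ [b]" "w = x @ [a] @ v @ y"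
    "r = ([a], [], [], [b])"
  using assms by (auto simp: R_ab_def flat_apply_def)

lemma flat_apply_R_abI:
  "a \<in> A \<Longrightarrow> b \<in> A \<Longrightarrow> ([a], [], [], [b]) \<in> R_ab A \<and>
    flat_apply ([a], [], [], [b]) (x @ [a] @ y) (z @ [b]) (x @ [a] @ z @ [b] @ y)"
  by (auto simp: R_ab_def flat_apply_def)

lemma flat_apply_append_left:
  assumes "flat_apply r u v w"
  shows "flat_apply r (p @ u) v (p @ w)"
proof -
  obtain \<alpha> \<beta> \<gamma> \<delta> where r: "r = (\<alpha>, \<beta>, \<gamma>, \<delta>)"
    by (cases r)
  from assms obtain x y z where "u = x @ \<alpha> @ \<beta> @ y" "v = \<gamma> @ z @ \<delta>"
    "w = x @ \<alpha> @ \<gamma> @ z @ \<delta> @ \<beta> @ y"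
    by (auto simp: flat_apply_def r)
  then show ?thesis
    unfolding flat_apply_def r prod.case by (intro exI[of _ "p @ x"] exI[of _ y] exI[of _ z]) auto
qed

lemma flat_lang_R_ab_nonempty_lists:
  assumes "Y \<subseteq> lists A - {[]}" and "w \<in> flat_lang Y (R_ab A)"
  shows "w \<in> lists A - {[]}"
  using assms(2) by induction (use assms(1) in \<open>auto simp: R_ab_def flat_apply_def\<close>)

lemma nonempty_lists_snoc:
  assumes "w \<in> lists A - {[]}"
  obtains z b where "w = z @ [b]" "b \<in> A"
  using assms by (cases w rule: rev_cases) auto

locale flat_splicing_R_ab =
  fixes A :: "'a set" and Y :: "'a list set"
  assumes Y_nonempty_lists: "Y \<subseteq> lists A - {[]}"
begin

abbreviation L :: "'a list set" where
  "L \<equiv> flat_lang Y (R_ab A)"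

lemma L_nonempty_lists: "w \<in> L \<Longrightarrow> w \<in> lists A - {[]}"
  using flat_lang_R_ab_nonempty_lists[OF Y_nonempty_lists] .

lemma L_insert_after_nonempty:
  assumes "x @ y \<in> L" and "x \<noteq> []" and "v \<in> L"
  shows "x @ v @ y \<in> L"
proof -
  obtain x' a where x: "x = x' @ [a]"
    using \<open>x \<noteq> []\<close> rev_exhaust by blast
  have "a \<in> A"
    using L_nonempty_lists[OF assms(1)] x by auto
  obtain z b where v: "v = z @ [b]" "b \<in> A"
    using L_nonempty_lists[OF \<open>v \<in> L\<close>] by (rule nonempty_lists_snoc)
  have "([a], [], [], [b]) \<in> R_ab A"
    and "flat_apply ([a], [], [], [b]) (x' @ [a] @ y) v (x' @ [a] @ v @ y)"
    using flat_apply_R_abI[OF \<open>a \<in> A\<close> \<open>b \<in> A\<close>, of x' y z] by (simp_all add: v)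
  from flat_lang.step[OF this(1) _ \<open>v \<in> L\<close> this(2)] show ?thesis
    using assms(1) by (simp add: x)
qed

lemma L_prepend:
  assumes "u \<in> L" and "v \<in> L"
  shows "v @ u \<in> L"
  using assms(1)
proof induction
  case (base u)
  have "v @ [] @ u \<in> L"
    using L_insert_after_nonempty[of v "[]" u] \<open>v \<in> L\<close> flat_lang.base[OF base]
      L_nonempty_lists[OF \<open>v \<in> L\<close>]
    by simp
  then show ?case by simp
next
  case (step r u1 u2 w)
  show ?case
    using flat_lang.step[OF step.hyps(1) _ step.hyps(3) flat_apply_append_left[OF step.hyps(4)]]
      step.IH(1) by simp
qed

lemma L_insert:
  assumes "x @ y \<in> insert [] L" and "v \<in> L"
  shows "x @ v @ y \<in> L"
proof (cases "x = []")
  case True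
  then show ?thesis
    using assms L_prepend[of y v] by auto
next
  case False
  then show ?thesis
    using assms L_insert_after_nonempty by auto
qed

lemma iter_insertion_subset_L: "iter_insertion Y i \<subseteq> insert [] L"
proof (induction i)
  case (Suc i)
  show ?case
  proof
    fix w assume "w \<in> iter_insertion Y (Suc i)"
    then obtain z1 y z2 where w: "w = z1 @ y @ z2" "z1 @ z2 \<in> iter_insertion Y i" "y \<in> Y"
      by (auto elim: insertionE)
    have "z1 @ z2 \<in> insert [] L"
      using Suc.IH w(2) ..
    from L_insert[OF this flat_lang.base[OF w(3)]] show "w \<in> insert [] L"
      by (simp add: w(1))
  qed
qed simp

lemma L_subset_iter_insertion_star: "L \<subseteq> iter_insertion_star Y"
proof
  fix w assume "w \<in> L"
  then show "w \<in> iter_insertion_star Y"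
  proof induction
    case (base u)
    then show ?case using Y_subset_iter_insertion_star by blast
  next
    case (step r u v w)
    obtain x a y z b where "u = x @ [a] @ y" "v = z @ [b]" "w = x @ [a] @ v @ y"
      using flat_apply_R_abE[OF step.hyps(1,4)] .
    with step.IH iter_insertion_star_insert[of "x @ [a]" y Y v] show ?case
      by simp
  qed
qed

end

theorem proposition11p8:
  fixes A :: "'a set" and Y :: "'a list set"
  assumes "finite A"
    and "Y \<subseteq> lists A - {[]}"
  shows "iter_insertion_star Y - {[]} = flat_lang Y (R_ab A)"
proof -
  interpret flat_splicing_R_ab A Y
    using assms(2) by unfold_locales
  have "iter_insertion_star Y \<subseteq> insert [] L"
    unfolding iter_insertion_star_def using iter_insertion_subset_L by blast
  moreover have "[] \<notin> L"
    using L_nonempty_lists by blast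
  ultimately show ?thesis
    using L_subset_iter_insertion_star by blast
qed

end
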